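(* Let $E$ be a Banach lattice with an order continuous norm, let $\mathfrak{B}$ be a Boolean subalgebra of $\mathfrak{B}(E)$ and let $\xi$ be a forward filtration in $\mathfrak{B}$. (i) If $T,S\colon E\to E$ are commuting $\mathfrak{B}$-Volterra operators then $\hat{T}_\xi$ and $\hat{S}_\xi$ commute on $\mathcal{M}_0(\xi)$. (ii) If $T$ is $\mathfrak{B}$-Volterra and $S=\pi T$ for some $\pi\in\mathfrak{B}$, then $\hat{S}_\xi=\pi\cdot\hat{T}_\xi$. (iii) If $T$ is $\mathfrak{B}$-Volterra and $S=\pi+T-\pi T$ for some $\pi\in\mathfrak{B}$, then $\hat{S}_\xi=\hat{\pi}_\xi+\hat{T}_\xi-\pi\cdot\hat{T}_\xi$.
   Context: $\mathfrak{B}(E)$ is the Boolean algebra of all order projections on $E$ ($\pi\le\rho$ iff $\pi\rho=\pi$, zero $\mathbf 0$, unit $\mathbf 1=I_E$). A positive operator $T$ is $\mathfrak{B}$-Volterra if for all $\pi\in\mathfrak{B}$, $x,y\in E$, $\pi x=\pi y$ implies $\pi Tx=\pi Ty$. A forward filtration in $\mathfrak{B}$ is a map $\xi\colon\{0,1,\dots,\infty\}\to\mathfrak{B}$ with $\xi_n\le\xi_{n+1}$, $\xi_0=\mathbf 0$, $\xi_\infty=\mathbf 1$. $\mathcal{M}_0(\xi)$ is the set of sequences $(x_n)_{n\ge1}$ in $E$ with $\xi_nx_m=x_n$ whenever $m\ge n\ge1$. For a positive operator $R$ on $E$ (in particular $R=\pi\in\mathfrak{B}$), $\hat{R}_\xi((x_n)_{n\ge1})=(\xi_nRx_n)_{n\ge1}$,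 and $\pi\cdot(x_n)_{n\ge1}=(\pi x_n)_{n\ge1}$. *)

theory Defs
  imports Complex_Main "HOL-Library.Extended_Nat"
begin

class banach_lattice = banach + ordered_real_vector + lattice +
  assumes lattice_norm: "sup x (- x) \<le> sup y (- y) \<Longrightarrow> norm x \<le> norm y"

text \<open>Order continuous norm: whenever a net decreases to 0 (x_alpha down to 0), its norms
  tend to 0. Formulated with downward directed sets D with infimum 0.\<close>
definition order_continuous_norm :: "'a::banach_lattice itself \<Rightarrow> bool" where
  "order_continuous_norm _ \<longleftrightarrow>
     (\<forall>D::'a set. D \<noteq> {} \<and> (\<forall>a\<in>D. \<forall>b\<in>D. \<exists>c\<in>D. c \<le> a \<and> c \<le> b)
        \<and> (\<forall>d\<in>D. 0 \<le> d) \<and> (\<forall>z. (\<forall>d\<in>D. z \<le> d) \<longrightarrow> z \<le> 0)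
        \<longrightarrow> (\<forall>e>0. \<exists>d\<in>D. norm d < e))"

definition positive_operator :: "('a::banach_lattice \<Rightarrow> 'a) \<Rightarrow> bool" where
  "positive_operator T \<longleftrightarrow> linear T \<and> (\<forall>x. 0 \<le> x \<longrightarrow> 0 \<le> T x)"

definition order_projection :: "('a::banach_lattice \<Rightarrow> 'a) \<Rightarrow> bool" where
  "order_projection P \<longleftrightarrow> linear P \<and> P \<circ> P = P \<and> (\<forall>x. 0 \<le> x \<longrightarrow> 0 \<le> P x \<and> P x \<le> x)"

definition proj_le :: "('a \<Rightarrow> 'a) \<Rightarrow> ('a \<Rightarrow> 'a) \<Rightarrow> bool" where
  "proj_le \<pi> \<rho> \<longleftrightarrow> \<pi> \<circ> \<rho> = \<pi>"

text \<open>Boolean subalgebra of the Boolean algebra of all order projections: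
  contains zero and unit, closed under meet (composition), join (pi + rho - pi rho)
  and complement (I - pi).\<close>
definition boolean_subalgebra :: "('a::banach_lattice \<Rightarrow> 'a) set \<Rightarrow> bool" where
  "boolean_subalgebra B \<longleftrightarrow>
     (\<forall>\<pi>\<in>B. order_projection \<pi>) \<and> (\<lambda>x. 0) \<in> B \<and> id \<in> B
     \<and> (\<forall>\<pi>\<in>B. \<forall>\<rho>\<in>B. \<pi> \<circ> \<rho> \<in> B)
     \<and> (\<forall>\<pi>\<in>B. \<forall>\<rho>\<in>B. (\<lambda>x. \<pi> x + \<rho> x - \<pi> (\<rho> x)) \<in> B)
     \<and> (\<forall>\<pi>\<in>B. (\<lambda>x. x - \<pi> x) \<in> B)"

definition volterra :: "('a::banach_lattice \<Rightarrow> 'a) set \<Rightarrow> ('a \<Rightarrow> 'a) \<Rightarrow> bool" where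
  "volterra B T \<longleftrightarrow> positive_operator T \<and>
     (\<forall>\<pi>\<in>B. \<forall>x y. \<pi> x = \<pi> y \<longrightarrow> \<pi> (T x) = \<pi> (T y))"

definition forward_filtration :: "('a::banach_lattice \<Rightarrow> 'a) set \<Rightarrow> (enat \<Rightarrow> 'a \<Rightarrow> 'a) \<Rightarrow> bool" where
  "forward_filtration B \<xi> \<longleftrightarrow> (\<forall>n. \<xi> n \<in> B)
     \<and> (\<forall>n::nat. proj_le (\<xi> (enat n)) (\<xi> (enat (Suc n))))
     \<and> \<xi> 0 = (\<lambda>x. 0) \<and> \<xi> \<infinity> = id"

text \<open>M_0(xi): sequences (x_n)_{n \<ge> 1}; the entry at index 0 is ignored.\<close>
definition M0 :: "(enat \<Rightarrow> 'a::banach_lattice \<Rightarrow> 'a) \<Rightarrow> (nat \<Rightarrow> 'a) set" where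
  "M0 \<xi> = {x. \<forall>m n. 1 \<le> n \<and> n \<le> m \<longrightarrow> \<xi> (enat n) (x m) = x n}"

definition hat :: "(enat \<Rightarrow> 'a \<Rightarrow> 'a) \<Rightarrow> ('a \<Rightarrow> 'a) \<Rightarrow> (nat \<Rightarrow> 'a) \<Rightarrow> (nat \<Rightarrow> 'a)" where
  "hat \<xi> R x = (\<lambda>n. \<xi> (enat n) (R (x n)))"

end

theory Submission
  imports Defs
begin

text \<open>Any two order projections \<open>p\<close>, \<open>q\<close> commute: for \<open>x \<ge> 0\<close> the element
  \<open>p q x\<close> lies between \<open>0\<close> and \<open>q x\<close>, so \<open>q\<close> fixes it; applied to the order
  projection \<open>I - q\<close> this gives \<open>q p (I - q) x = 0\<close>, and positive elements span.
  So each \<open>\<pi> \<in> B\<close> commutes with each \<open>\<xi>\<^sub>n\<close>, while the Volterra property says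
  \<open>\<xi>\<^sub>n T \<xi>\<^sub>n = \<xi>\<^sub>n T\<close>. Hence
  \<open>\<xi>\<^sub>n T \<xi>\<^sub>n S x\<^sub>n = \<xi>\<^sub>n T S x\<^sub>n\<close>, which gives (i), and
  \<open>\<xi>\<^sub>n \<pi> = \<pi> \<xi>\<^sub>n\<close> with linearity of \<open>\<xi>\<^sub>n\<close> gives (ii) and (iii).\<close>

lemma order_projection_idem:
  assumes "order_projection p"
  shows "p (p x) = p x"
  using assms unfolding order_projection_def by (metis comp_apply)

lemma linear_eq_on_nonneg:
  fixes f g :: "'a::{ordered_real_vector, lattice} \<Rightarrow> 'b::real_vector"
  assumes "linear f" and "linear g" and "\<And>y. 0 \<le> y \<Longrightarrow> f y = g y"
  shows "f x = g x"
proof -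
  have "x = sup x 0 - (sup x 0 - x)" by simp
  moreover have "0 \<le> sup x 0" and "0 \<le> sup x 0 - x" by simp_all
  ultimately show ?thesis
    using assms by (metis linear_diff)
qed

lemma order_projection_fixes_comp_nonneg:
  fixes p q :: "'a::banach_lattice \<Rightarrow> 'a"
  assumes p: "order_projection p" and q: "order_projection q" and "0 \<le> x"
  shows "q (p (q x)) = p (q x)"
proof -
  define y where "y = p (q x)"
  have "0 \<le> q x" using q \<open>0 \<le> x\<close> unfolding order_projection_def by blast
  then have "0 \<le> y" and "y \<le> q x" using p unfolding y_def order_projection_def by blast+
  have "q (q x - y) \<le> q x - y"
    using q \<open>y \<le> q x\<close> unfolding order_projection_def by simp
  then have "y \<le> q y"
    using q order_projection_idem[OF q] unfolding order_projection_def by (simp add: linear_diff)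
  moreover have "q y \<le> y" using q \<open>0 \<le> y\<close> unfolding order_projection_def by blast
  ultimately show ?thesis unfolding y_def by (rule order.antisym[symmetric])
qed

lemma order_projection_complement:
  assumes "order_projection q"
  shows "order_projection (\<lambda>x. x - q x)"
proof -
  have "linear q" and "\<And>x. 0 \<le> x \<Longrightarrow> 0 \<le> q x \<and> q x \<le> x"
    using assms unfolding order_projection_def by blast+
  moreover from \<open>linear q\<close> have "linear (\<lambda>x. x - q x)"
    by (intro linear_compose_sub linear_ident)
  ultimately show ?thesis
    using order_projection_idem[OF assms]
    unfolding order_projection_def by (auto simp: fun_eq_iff linear_diff)
qed

lemma order_projections_commute:
  fixes p q :: "'a::banach_lattice \<Rightarrow> 'a"
  assumes p: "order_projection p" and q: "order_projection q"
  shows "q (p x) = p (q x)"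
proof (rule linear_eq_on_nonneg[of "q \<circ> p" "p \<circ> q", simplified])
  have "linear p" and "linear q" using p q unfolding order_projection_def by blast+
  then show "linear (q \<circ> p)" and "linear (p \<circ> q)" by (simp_all add: linear_compose)
  fix y :: 'a
  assume "0 \<le> y"
  have "q (p (q y)) = p (q y)"
    using order_projection_fixes_comp_nonneg[OF p q \<open>0 \<le> y\<close>] .
  moreover have "q (p (y - q y)) = 0"
    using order_projection_fixes_comp_nonneg[OF p order_projection_complement[OF q] \<open>0 \<le> y\<close>] by simp
  ultimately show "q (p y) = p (q y)"
    using \<open>linear p\<close> \<open>linear q\<close> by (simp add: linear_diff)
qed

lemma boolean_subalgebra_commute:
  assumes "boolean_subalgebra B" and "p \<in> B" and "q \<in> B"
  shows "q (p x) = p (q x)"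
  using assms unfolding boolean_subalgebra_def by (blast intro: order_projections_commute)

lemma volterra_compress:
  assumes "volterra B T" and "\<pi> \<in> B" and "order_projection \<pi>"
  shows "\<pi> (T (\<pi> y)) = \<pi> (T y)"
  using assms order_projection_idem unfolding volterra_def by blast

theorem corollary4p4:
  fixes B :: "('a::banach_lattice \<Rightarrow> 'a) set"
    and \<xi> :: "enat \<Rightarrow> 'a \<Rightarrow> 'a"
  assumes "order_continuous_norm TYPE('a)"
    and "boolean_subalgebra B"
    and "forward_filtration B \<xi>"
  shows "(\<forall>T S. volterra B T \<and> volterra B S \<and> T \<circ> S = S \<circ> T \<longrightarrow>
            (\<forall>x\<in>M0 \<xi>. \<forall>n\<ge>1. hat \<xi> T (hat \<xi> S x) n = hat \<xi> S (hat \<xi> T x) n))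
       \<and> (\<forall>T S \<pi>. volterra B T \<and> \<pi> \<in> B \<and> S = \<pi> \<circ> T \<longrightarrow>
            (\<forall>x\<in>M0 \<xi>. \<forall>n\<ge>1. hat \<xi> S x n = \<pi> (hat \<xi> T x n)))
       \<and> (\<forall>T S \<pi>. volterra B T \<and> \<pi> \<in> B \<and> S = (\<lambda>y. \<pi> y + T y - \<pi> (T y)) \<longrightarrow>
            (\<forall>x\<in>M0 \<xi>. \<forall>n\<ge>1. hat \<xi> S x n = hat \<xi> \<pi> x n + hat \<xi> T x n - \<pi> (hat \<xi> T x n)))"
proof -
  have \<xi>B: "\<xi> k \<in> B" for k
    using assms(3) unfolding forward_filtration_def by blast
  have \<xi>P: "order_projection (\<xi> k)" for k
    using assms(2) \<xi>B unfolding boolean_subalgebra_def by blast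
  have \<pi>\<xi>: "\<xi> k (\<pi> y) = \<pi> (\<xi> k y)" if "\<pi> \<in> B" for \<pi> k y
    using boolean_subalgebra_commute[OF assms(2) that \<xi>B] .
  have "linear (\<xi> k)" for k
    using \<xi>P unfolding order_projection_def by blast
  then have "\<xi> k (a + b - c) = \<xi> k a + \<xi> k b - \<xi> k c" for k a b c
    by (simp add: linear_add linear_diff)
  moreover have "hat \<xi> T (hat \<xi> S x) n = hat \<xi> S (hat \<xi> T x) n"
    if "volterra B T" and "volterra B S" and "T \<circ> S = S \<circ> T" for T S x n
    using that volterra_compress[OF _ \<xi>B \<xi>P] unfolding hat_def by (metis comp_apply)
  ultimately show ?thesis
    using \<pi>\<xi> unfolding hat_def by simp
qed

end
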